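(* Let $n\in\mathbb N$, $B\in\mathcal S_n(\mathcal H)$, $w\in\mathbb C\setminus\mathbb R$, and let $V:=b_w(B)Q_w$ (a partial isometry on $\mathcal H$). Let $U$ on $\mathcal K\supseteq\mathcal H$ be the minimal unitary dilation of $V$, and let $P_*$ be the orthogonal projection onto $\mathcal K\ominus\overline{\mathrm{span}}\{U^kx:k\in\mathbb Z,\ x\in\ker(B^*-w)\}$. Then for every $h\in\mathcal H$, $$(1-P_* )h=\sum_{j=0}^\infty U^{-j}P_wV^jh .$$
   Context: For a separable Hilbert space $\mathcal H$ and $n\in\mathbb N$, $\mathcal S_n(\mathcal H)$ is the set of linear transformations $B$ with domain $\mathrm{dom}(B)\subseteq\mathcal H$ (not necessarily dense) that are symmetric, closed, simple ($\bigcap_{z\in\mathbb C\setminus\mathbb R}\mathrm{ran}(B-z)=\{0\}$) and have deficiency indices $(n,n)$. For $z\in\mathbb C\setminus\mathbb R$ write $\ker(B^*-z):=\mathrm{ran}(B-\bar z)^\perp$. $b_w(z)=\frac{z-w}{z-\bar w}$; $b_w(B)=(B-w)(B-\bar w)^{-1}$ is an isometry of $\mathrm{ran}(B-\bar w)$ onto $\mathrm{ran}(B-w)$. $Q_w$ is the orthogonal projection onto $\mathrm{ran}(B-\bar w)$ and $P_w=1-Q_w$. A unitary $U$ on $\mathcal K\supseteq\mathcal H$ is a unitary dilation of a contraction $T$ on $\mathcal H$ if $T^k=P_{\mathcal H}U^k|_{\mathcal H}$ for all $k\ge0$; it is minimal if $\mathcal K$ is the smallest $U$-reducing subspace containing $\mathcal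 H$. *)

theory Defs
  imports "HOL-Analysis.Analysis"
begin

text \<open>A complex Hilbert space: a Banach space with a compatible complex scalar multiplication, whose norm satisfies the
parallelogram law (equivalently, the norm comes from an inner product, recovered
by polarization below).\<close>

class chilbert = banach +
  fixes cscale :: "complex \<Rightarrow> 'a \<Rightarrow> 'a"  (infixr \<open>*\<^sub>C\<close> 75)
  assumes cscale_add_right: "a *\<^sub>C (x + y) = a *\<^sub>C x + a *\<^sub>C y"
    and cscale_add_left: "(a + b) *\<^sub>C x = a *\<^sub>C x + b *\<^sub>C x"
    and cscale_cscale: "a *\<^sub>C (b *\<^sub>C x) = (a * b) *\<^sub>C x"
    and cscale_one: "1 *\<^sub>C x = x"
    and scaleR_cscale: "r *\<^sub>R x = complex_of_real r *\<^sub>C x"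
    and norm_cscale: "norm (a *\<^sub>C x) = cmod a * norm x"
    and parallelogram:
      "(norm (x + y))\<^sup>2 + (norm (x - y))\<^sup>2 = 2 * (norm x)\<^sup>2 + 2 * (norm y)\<^sup>2"

text \<open>Inner product via polarization (linear in the first argument).\<close>
definition cinner :: "'a::chilbert \<Rightarrow> 'a \<Rightarrow> complex" where
  "cinner x y = (\<Sum>k<(4::nat). \<i> ^ k * complex_of_real ((norm (x + (\<i> ^ k) *\<^sub>C y))\<^sup>2)) / 4"

definition separable_space :: "'a::chilbert itself \<Rightarrow> bool" where
  "separable_space _ \<longleftrightarrow> (\<exists>S::'a set. countable S \<and> closure S = UNIV)"

definition csubspace :: "'a::chilbert set \<Rightarrow> bool" where
  "csubspace M \<longleftrightarrow> 0 \<in> M \<and> (\<forall>x\<in>M. \<forall>y\<in>M. x + y \<in> M) \<and> (\<forall>c. \<forall>x\<in>M. c *\<^sub>C x \<in> M)"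

definition cspan :: "'a::chilbert set \<Rightarrow> 'a set" where
  "cspan S = {\<Sum>x\<in>F. c x *\<^sub>C x | F c. finite F \<and> F \<subseteq> S}"

definition clinear_on :: "'a::chilbert set \<Rightarrow> ('a \<Rightarrow> 'b::chilbert) \<Rightarrow> bool" where
  "clinear_on D f \<longleftrightarrow> (\<forall>x\<in>D. \<forall>y\<in>D. f (x + y) = f x + f y) \<and> (\<forall>c. \<forall>x\<in>D. f (c *\<^sub>C x) = c *\<^sub>C f x)"

definition orth :: "'a::chilbert set \<Rightarrow> 'a set" where
  "orth S = {y. \<forall>x\<in>S. cinner x y = 0}"

definition cproj :: "'a::chilbert set \<Rightarrow> 'a \<Rightarrow> 'a" where
  "cproj M h = (THE m. m \<in> M \<and> (\<forall>y\<in>M. cinner (h - m) y = 0))"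

definition has_cdim :: "'a::chilbert set \<Rightarrow> nat \<Rightarrow> bool" where
  "has_cdim S n \<longleftrightarrow> (\<exists>e::nat \<Rightarrow> 'a.
      (\<forall>i<n. \<forall>j<n. cinner (e i) (e j) = (if i = j then 1 else 0)) \<and>
      S = cspan (e ` {..<n}))"

definition ranB :: "('a::chilbert \<Rightarrow> 'a) \<Rightarrow> 'a set \<Rightarrow> complex \<Rightarrow> 'a set" where
  "ranB B D z = {B x - z *\<^sub>C x | x. x \<in> D}"

text \<open>ker(B^* - z) := ran(B - conj z)^perp\<close>
definition defect_space :: "('a::chilbert \<Rightarrow> 'a) \<Rightarrow> 'a set \<Rightarrow> complex \<Rightarrow> 'a set" where
  "defect_space B D z = orth (ranB B D (cnj z))"

text \<open>The class S_n(H): symmetric, closed, simple, deficiency indices (n,n).\<close>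
definition in_Sn :: "nat \<Rightarrow> ('a::chilbert \<Rightarrow> 'a) \<Rightarrow> 'a set \<Rightarrow> bool" where
  "in_Sn n B D \<longleftrightarrow>
     csubspace D \<and> clinear_on D B \<and>
     (\<forall>x\<in>D. \<forall>y\<in>D. cinner (B x) y = cinner x (B y)) \<and>
     closed {(x, B x) | x. x \<in> D} \<and>
     (\<Inter>z\<in>{z. Im z \<noteq> 0}. ranB B D z) = {0} \<and>
     (\<forall>z. Im z \<noteq> 0 \<longrightarrow> has_cdim (defect_space B D z) n)"

definition Qw :: "('a::chilbert \<Rightarrow> 'a) \<Rightarrow> 'a set \<Rightarrow> complex \<Rightarrow> 'a \<Rightarrow> 'a" where
  "Qw B D w = cproj (ranB B D (cnj w))"

definition Pw :: "('a::chilbert \<Rightarrow> 'a) \<Rightarrow> 'a set \<Rightarrow> complex \<Rightarrow> 'a \<Rightarrow> 'a" where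
  "Pw B D w h = h - Qw B D w h"

text \<open>b_w(B) = (B - w)(B - conj w)^{-1} on ran(B - conj w).\<close>
definition bwB :: "('a::chilbert \<Rightarrow> 'a) \<Rightarrow> 'a set \<Rightarrow> complex \<Rightarrow> 'a \<Rightarrow> 'a" where
  "bwB B D w y = (let x = (THE x. x \<in> D \<and> B x - cnj w *\<^sub>C x = y) in B x - w *\<^sub>C x)"

definition Vw :: "('a::chilbert \<Rightarrow> 'a) \<Rightarrow> 'a set \<Rightarrow> complex \<Rightarrow> 'a \<Rightarrow> 'a" where
  "Vw B D w h = bwB B D w (Qw B D w h)"

definition unitary_op :: "('k::chilbert \<Rightarrow> 'k) \<Rightarrow> bool" where
  "unitary_op U \<longleftrightarrow> clinear_on UNIV U \<and> bij U \<and> (\<forall>x. norm (U x) = norm x)"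

definition upow :: "('k \<Rightarrow> 'k) \<Rightarrow> int \<Rightarrow> 'k \<Rightarrow> 'k" where
  "upow U k = (if 0 \<le> k then U ^^ nat k else (inv U) ^^ nat (- k))"

text \<open>H is embedded in K by the isometric linear map J. U is a unitary dilation of T
if T^k = P_H U^k |_H for all k >= 0, and it is minimal if K is the smallest
U-reducing (closed) subspace containing H.\<close>
definition isometric_embedding :: "('h::chilbert \<Rightarrow> 'k::chilbert) \<Rightarrow> bool" where
  "isometric_embedding J \<longleftrightarrow> clinear_on UNIV J \<and> (\<forall>x. norm (J x) = norm x)"

definition unitary_dilation ::
  "('h::chilbert \<Rightarrow> 'k::chilbert) \<Rightarrow> ('k \<Rightarrow> 'k) \<Rightarrow> ('h \<Rightarrow> 'h) \<Rightarrow> bool" where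
  "unitary_dilation J U T \<longleftrightarrow> isometric_embedding J \<and> unitary_op U \<and>
     (\<forall>k::nat. \<forall>h. J ((T ^^ k) h) = cproj (range J) ((U ^^ k) (J h)))"

definition minimal_unitary_dilation ::
  "('h::chilbert \<Rightarrow> 'k::chilbert) \<Rightarrow> ('k \<Rightarrow> 'k) \<Rightarrow> ('h \<Rightarrow> 'h) \<Rightarrow> bool" where
  "minimal_unitary_dilation J U T \<longleftrightarrow> unitary_dilation J U T \<and>
     (\<forall>M. csubspace M \<and> closed M \<and> U ` M \<subseteq> M \<and> inv U ` M \<subseteq> M \<and> range J \<subseteq> M
          \<longrightarrow> M = UNIV)"

end

theory Submission
  imports Defs
begin

text \<open>
  A defect vector x in ker(B* - w) is annihilated by V, so the dilation identity
  <U^m J x, J y> = <V^m x, y> (m \<ge> 0) makes the translates U^k J ker(B* - w), k \<in> \<int>, mutually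
  orthogonal, and gives <U^k J x, J h> = 0 for k > 0 and <U^k J x, J h> = <x, V^(-k) h> =
  <x, P_w V^(-k) h> for k \<le> 0. Hence the terms U^(-j) J P_w V^j h are pairwise orthogonal, and since
  V is isometric on ran Q_w their squared norms |V^j h|^2 - |V^(j+1) h|^2 telescope, so the series
  converges. Its sum lies in the closed span L of the translates and has the same inner product
  with every generator as J h; so J h minus the sum is orthogonal to L, i.e. the sum is the
  orthogonal projection of J h onto L.
\<close>

interpretation cscale: module "cscale :: complex \<Rightarrow> 'a::chilbert \<Rightarrow> 'a"
  by standard (simp_all add: cscale_add_right cscale_add_left cscale_cscale cscale_one)

lemma csubspace_eq_subspace: "csubspace = cscale.subspace"
  by (simp add: fun_eq_iff csubspace_def cscale.subspace_def)

lemma cspan_eq_span: "cspan = cscale.span"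
  by (simp add: fun_eq_iff cspan_def cscale.span_explicit)

lemma cscale_of_real: "complex_of_real r *\<^sub>C x = r *\<^sub>R (x::'a::chilbert)"
  by (simp add: scaleR_cscale)

lemma cscale_eq_scaleR_Re_Im: "c *\<^sub>C x = Re c *\<^sub>R x + Im c *\<^sub>R (\<i> *\<^sub>C (x::'a::chilbert))"
proof -
  have "c = complex_of_real (Re c) + complex_of_real (Im c) * \<i>"
    by (simp add: complex_eq_iff)
  then have "c *\<^sub>C x = (complex_of_real (Re c) + complex_of_real (Im c) * \<i>) *\<^sub>C x"
    by (rule arg_cong)
  then show ?thesis
    by (simp add: cscale_add_left flip: cscale_of_real)
qed

lemma norm_i_cscale [simp]: "norm (\<i> *\<^sub>C (x::'a::chilbert)) = norm x"
  by (simp add: norm_cscale)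

lemma bounded_linear_cscale: "bounded_linear (\<lambda>x::'a::chilbert. c *\<^sub>C x)"
proof
  show "c *\<^sub>C (r *\<^sub>R x) = r *\<^sub>R (c *\<^sub>C x)" for r and x :: 'a
    by (simp add: cscale_of_real[symmetric] mult.commute)
  show "\<exists>K. \<forall>x::'a. norm (c *\<^sub>C x) \<le> norm x * K"
    by (rule exI[of _ "cmod c"]) (simp add: norm_cscale mult.commute)
qed (rule cscale_add_right)

lemma bounded_linear_clinear_isometry:
  assumes "clinear_on UNIV f" and "\<And>x. norm (f x) = norm x"
  shows "bounded_linear f"
proof
  show "f (x + y) = f x + f y" "f (r *\<^sub>R x) = r *\<^sub>R f x" for x y r
    using assms(1) by (simp_all add: clinear_on_def flip: cscale_of_real)
  show "\<exists>K. \<forall>x. norm (f x) \<le> norm x * K"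
    using assms(2) by (intro exI[of _ 1]) simp
qed

section \<open>The inner product\<close>

text \<open>The class only postulates the parallelogram law, so sesquilinearity of \<open>cinner\<close> has to be
  derived (Jordan--von Neumann): its real part \<open>polar\<close> is additive by the parallelogram law and
  then real-homogeneous because it is bounded on segments.\<close>

lemma additive_bounded_real_fun_linear:
  fixes f :: "real \<Rightarrow> real"
  assumes add: "\<And>a b. f (a + b) = f a + f b"
    and bound: "\<And>t. 0 \<le> t \<Longrightarrow> t \<le> 1 \<Longrightarrow> \<bar>f t\<bar> \<le> C"
  shows "f t = t * f 1"
proof -
  define g where "g t = f t - t * f 1" for t
  interpret g: additive g
    by standard (simp add: g_def add algebra_simps)
  have g_nat_mult: "g (real m * s) = real m * g s" for m s
    by (induction m) (simp_all add: g.zero g.add distrib_right)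
  have g_int: "g (of_int k) = 0" for k
    using g_nat_mult[of "nat \<bar>k\<bar>" 1] g.minus[of "real (nat \<bar>k\<bar>)"]
    by (cases "k \<ge> 0") (simp_all add: g_def)
  have scaled_bound: "real m * \<bar>g t\<bar> \<le> C + \<bar>f 1\<bar>" for m
  proof -
    define r where "r = real m * t - of_int \<lfloor>real m * t\<rfloor>"
    have r: "0 \<le> r" "r \<le> 1"
      unfolding r_def by linarith+
    have "real m * g t = g r"
      using g.add[of "of_int \<lfloor>real m * t\<rfloor>" r] by (simp add: r_def g_int flip: g_nat_mult)
    moreover have "\<bar>g r\<bar> \<le> C + \<bar>f 1\<bar>"
    proof -
      have "\<bar>r * f 1\<bar> \<le> \<bar>f 1\<bar>"
        using r by (simp add: abs_mult mult_left_le_one_le)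
      then show ?thesis
        using abs_triangle_ineq4[of "f r" "r * f 1"] bound[OF r] unfolding g_def by linarith
    qed
    ultimately show ?thesis
      by (simp add: abs_mult)
  qed
  have "g t = 0"
  proof (rule ccontr)
    assume "g t \<noteq> 0"
    then obtain m where "C + \<bar>f 1\<bar> < real m * \<bar>g t\<bar>"
      using ex_less_of_nat_mult[of "\<bar>g t\<bar>" "C + \<bar>f 1\<bar>"] by auto
    then show False
      using scaled_bound[of m] by linarith
  qed
  then show ?thesis
    by (simp add: g_def)
qed

definition polar :: "'a::chilbert \<Rightarrow> 'a \<Rightarrow> real" where
  "polar x y = ((norm (x + y))\<^sup>2 - (norm (x - y))\<^sup>2) / 4"

lemma cinner_eq_polar: "cinner x y = Complex (polar x y) (polar x (\<i> *\<^sub>C y))"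
proof -
  have "(\<Sum>k<(4::nat). \<i> ^ k * complex_of_real ((norm (x + (\<i> ^ k) *\<^sub>C y))\<^sup>2))
     = complex_of_real ((norm (x + y))\<^sup>2) + \<i> * complex_of_real ((norm (x + \<i> *\<^sub>C y))\<^sup>2)
       - complex_of_real ((norm (x - y))\<^sup>2) - \<i> * complex_of_real ((norm (x - \<i> *\<^sub>C y))\<^sup>2)"
    by (simp add: numeral_eq_Suc del: of_real_power)
  then show ?thesis
    unfolding cinner_def polar_def by (simp add: complex_eq_iff)
qed

lemma polar_sym: "polar x y = polar y x"
  unfolding polar_def by (simp add: add.commute norm_minus_commute)

lemma polar_zero_left [simp]: "polar 0 y = 0"
  by (simp add: polar_def)

lemma polar_minus_left: "polar (- x) y = - polar x y"
proof -
  have "norm (- x + y) = norm (x - y)" "norm (- x - y) = norm (x + y)"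
    using norm_minus_cancel[of "x - y"] norm_minus_cancel[of "x + y"] by (simp_all add: algebra_simps)
  then show ?thesis
    unfolding polar_def by (simp add: field_simps)
qed

lemma polar_minus_right: "polar x (- y) = - polar x y"
  by (simp add: polar_sym[of x] polar_minus_left)

lemma polar_i_cscale_both: "polar (\<i> *\<^sub>C x) (\<i> *\<^sub>C y) = polar x y"
  unfolding polar_def by (simp flip: cscale_add_right cscale.scale_right_diff_distrib)

lemma polar_i_cscale_left: "polar (\<i> *\<^sub>C x) y = - polar x (\<i> *\<^sub>C y)"
  using polar_i_cscale_both[of "\<i> *\<^sub>C x" y] by (simp add: polar_minus_left)

lemma polar_jensen: "polar (x + x') y + polar (x - x') y = 2 * polar x y"
proof -
  have "(norm (x + x' + y))\<^sup>2 + (norm (x - x' + y))\<^sup>2 = 2 * (norm (x + y))\<^sup>2 + 2 * (norm x')\<^sup>2"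
    using parallelogram[of "x + y" x'] by (simp add: algebra_simps)
  moreover have "(norm (x + x' - y))\<^sup>2 + (norm (x - x' - y))\<^sup>2 = 2 * (norm (x - y))\<^sup>2 + 2 * (norm x')\<^sup>2"
    using parallelogram[of "x - y" x'] by (simp add: algebra_simps)
  ultimately show ?thesis
    unfolding polar_def by (simp add: field_simps)
qed

lemma polar_add_left: "polar (u + v) y = polar u y + polar v y"
proof -
  define x x' where "x = (1/2) *\<^sub>R (u + v)" and "x' = (1/2) *\<^sub>R (u - v)"
  have "x + x' = u" "x - x' = v" "x + x = u + v"
    unfolding x_def x'_def by (simp_all add: algebra_simps flip: scaleR_2)
  then show ?thesis
    using polar_jensen[of x x' y] polar_jensen[of x x y] by simp
qed

lemma polar_abs_le: "\<bar>polar x y\<bar> \<le> (norm x + norm y)\<^sup>2 / 4"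
proof -
  have quarter: "\<bar>(a - b) / 4\<bar> \<le> c / 4" if "0 \<le> a" "0 \<le> b" "a \<le> c" "b \<le> c" for a b c :: real
    using that by (simp add: abs_le_iff)
  have "(norm (x + y))\<^sup>2 \<le> (norm x + norm y)\<^sup>2" "(norm (x - y))\<^sup>2 \<le> (norm x + norm y)\<^sup>2"
    by (rule power_mono[OF norm_triangle_ineq norm_ge_zero],
        rule power_mono[OF norm_triangle_ineq4 norm_ge_zero])
  then show ?thesis
    unfolding polar_def by (rule quarter[OF zero_le_power2 zero_le_power2])
qed

lemma polar_scaleR_left: "polar (r *\<^sub>R x) y = r * polar x y"
proof -
  have "polar (r *\<^sub>R x) y = r * polar (1 *\<^sub>R x) y"
  proof (rule additive_bounded_real_fun_linear[where f = "\<lambda>r. polar (r *\<^sub>R x) y"])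
    show "polar ((a + b) *\<^sub>R x) y = polar (a *\<^sub>R x) y + polar (b *\<^sub>R x) y" for a b
      by (simp add: scaleR_add_left polar_add_left)
    show "\<bar>polar (t *\<^sub>R x) y\<bar> \<le> (norm x + norm y)\<^sup>2 / 4" if "0 \<le> t" "t \<le> 1" for t
    proof -
      have "norm (t *\<^sub>R x) \<le> norm x"
        using that by (simp add: mult_left_le_one_le)
      then have "(norm (t *\<^sub>R x) + norm y)\<^sup>2 \<le> (norm x + norm y)\<^sup>2"
        by (intro power_mono add_right_mono) simp_all
      then show ?thesis
        using polar_abs_le[of "t *\<^sub>R x" y] by linarith
    qed
  qed
  then show ?thesis
    by simp
qed

lemma cinner_add_left: "cinner (x + y) z = cinner x z + cinner y z"
  by (simp add: cinner_eq_polar polar_add_left complex_eq_iff)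

lemma cinner_cscale_left: "cinner (c *\<^sub>C x) y = c * cinner x y"
proof -
  have "cinner (c *\<^sub>C x) y = Complex (Re c * polar x y + Im c * polar (\<i> *\<^sub>C x) y)
      (Re c * polar x (\<i> *\<^sub>C y) + Im c * polar (\<i> *\<^sub>C x) (\<i> *\<^sub>C y))"
    unfolding cinner_eq_polar cscale_eq_scaleR_Re_Im[of c x] by (simp add: polar_add_left polar_scaleR_left)
  also have "\<dots> = c * cinner x y"
    by (simp add: cinner_eq_polar polar_i_cscale_both polar_i_cscale_left polar_minus_right complex_eq_iff)
  finally show ?thesis .
qed

lemma cinner_commute: "cinner y x = cnj (cinner x y)"
proof -
  have "polar y (\<i> *\<^sub>C x) = - polar x (\<i> *\<^sub>C y)"
    using polar_sym[of y "\<i> *\<^sub>C x"] polar_i_cscale_left[of x y] by simp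
  then show ?thesis
    by (simp add: cinner_eq_polar complex_eq_iff polar_sym)
qed

lemma cinner_self: "cinner x x = complex_of_real ((norm x)\<^sup>2)"
proof -
  have "polar x (\<i> *\<^sub>C x) = 0"
    using polar_sym[of x "\<i> *\<^sub>C x"] polar_i_cscale_left[of x x] by simp
  moreover have "polar x x = (norm x)\<^sup>2"
    by (simp add: polar_def power_mult_distrib flip: scaleR_2)
  ultimately show ?thesis
    by (simp add: cinner_eq_polar complex_eq_iff)
qed

lemma cinner_self_eq_zero [simp]: "cinner x x = 0 \<longleftrightarrow> x = 0"
  by (simp add: cinner_self)

lemma additive_cinner_left: "Modules.additive (\<lambda>x. cinner x y)"
  by standard (rule cinner_add_left)

lemma cinner_zero_left [simp]: "cinner 0 y = 0"
  by (rule additive.zero[OF additive_cinner_left])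

lemma cinner_diff_left: "cinner (x - x') y = cinner x y - cinner x' y"
  by (rule additive.diff[OF additive_cinner_left])

lemma cinner_sum_left: "cinner (\<Sum>i\<in>F. f i) y = (\<Sum>i\<in>F. cinner (f i) y)"
  by (rule additive.sum[OF additive_cinner_left])

lemma cinner_add_right: "cinner x (y + z) = cinner x y + cinner x z"
  by (subst (1 2 3) cinner_commute) (simp add: cinner_add_left)

lemma cinner_cscale_right: "cinner x (c *\<^sub>C y) = cnj c * cinner x y"
  by (subst (1 2) cinner_commute) (simp add: cinner_cscale_left)

lemma cinner_zero_right [simp]: "cinner x 0 = 0"
  by (subst cinner_commute) simp

lemma cinner_diff_right: "cinner x (y - y') = cinner x y - cinner x y'"
  by (subst (1 2 3) cinner_commute) (simp add: cinner_diff_left)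

lemma cinner_minus_right: "cinner x (- y) = - cinner x y"
  using cinner_diff_right[of x 0 y] by simp

lemma cinner_sum_right: "cinner x (\<Sum>i\<in>F. f i) = (\<Sum>i\<in>F. cinner x (f i))"
  by (subst cinner_commute) (simp add: cinner_sum_left flip: cinner_commute)

lemma norm_add_square: "(norm (x + y))\<^sup>2 = (norm x)\<^sup>2 + (norm y)\<^sup>2 + 2 * Re (cinner x y)"
proof -
  have "complex_of_real ((norm (x + y))\<^sup>2) = cinner (x + y) (x + y)"
    by (simp add: cinner_self)
  also have "\<dots> = cinner x x + cinner y y + cinner x y + cnj (cinner x y)"
    by (simp add: cinner_add_left cinner_add_right cinner_commute[of y x])
  finally show ?thesis
    by (simp add: cinner_self complex_eq_iff)
qed

lemma norm_add_Pythagorean_cinner: "cinner x y = 0 \<Longrightarrow> (norm (x + y))\<^sup>2 = (norm x)\<^sup>2 + (norm y)\<^sup>2"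
  by (simp add: norm_add_square)

lemma tendsto_cinner_left: "(f \<longlongrightarrow> a) F \<Longrightarrow> ((\<lambda>n. cinner (f n) y) \<longlongrightarrow> cinner a y) F"
  unfolding cinner_def by (intro tendsto_intros bounded_linear.tendsto[OF bounded_linear_cscale]) simp_all

lemma tendsto_cinner_right: "(f \<longlongrightarrow> a) F \<Longrightarrow> ((\<lambda>n. cinner y (f n)) \<longlongrightarrow> cinner y a) F"
  by (subst (1 2) cinner_commute) (intro tendsto_cnj tendsto_cinner_left)

lemma continuous_on_cinner_right: "continuous_on S (\<lambda>y. cinner x y)"
  unfolding continuous_on_def by (intro ballI tendsto_cinner_right[where f = "\<lambda>y. y"] tendsto_ident_at)

lemma cinner_isometry:
  assumes "clinear_on UNIV f" and "\<And>x. norm (f x) = norm x"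
  shows "cinner (f x) (f y) = cinner x y"
proof -
  have "f (x + c *\<^sub>C y) = f x + c *\<^sub>C f y" for c
    using assms(1) by (simp add: clinear_on_def)
  then show ?thesis
    unfolding cinner_def by (simp flip: assms(2))
qed

section \<open>Orthogonal projections\<close>

lemma orth_csubspace: "csubspace (orth S)"
  unfolding csubspace_def orth_def by (simp add: cinner_add_right cinner_cscale_right)

lemma closed_orth: "closed (orth (S::'a::chilbert set))"
proof -
  have "closed {y. cinner x y = 0}" for x :: 'a
    by (rule closed_Collect_eq[OF continuous_on_cinner_right continuous_on_const])
  moreover have "orth S = (\<Inter>x\<in>S. {y. cinner x y = 0})"
    unfolding orth_def by auto
  ultimately show ?thesis
    by auto
qed

lemma orthogonal_closure_span:
  assumes "\<And>g. g \<in> G \<Longrightarrow> cinner g v = 0" and "u \<in> closure (cspan G)"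
  shows "cinner u v = 0"
proof -
  have "cinner u v = 0" if "u \<in> cspan G" for u
    using that assms(1) unfolding cspan_def
    by (fastforce simp: cinner_sum_left cinner_cscale_left intro!: sum.neutral)
  then have "u \<in> orth {v}" if "u \<in> cspan G" for u
    using that by (simp add: orth_def cinner_commute[of v])
  then have "closure (cspan G) \<subseteq> orth {v}"
    by (simp add: closure_minimal closed_orth subsetI)
  then show ?thesis
    using assms(2) by (auto simp: orth_def cinner_commute[of v])
qed

lemma cproj_eqI:
  assumes "csubspace M" "m \<in> M" "\<And>y. y \<in> M \<Longrightarrow> cinner (h - m) y = 0"
  shows "cproj M h = m"
  unfolding cproj_def
proof (rule the_equality)
  fix m' assume m': "m' \<in> M \<and> (\<forall>y\<in>M. cinner (h - m') y = 0)"
  then have "m - m' \<in> M"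
    using assms by (simp add: csubspace_eq_subspace cscale.subspace_diff)
  have "cinner (m - m') (m - m') = cinner (h - m') (m - m') - cinner (h - m) (m - m')"
    by (simp add: cinner_diff_left[symmetric])
  then have "cinner (m - m') (m - m') = 0"
    using assms m' \<open>m - m' \<in> M\<close> by simp
  then show "m' = m"
    by simp
qed (use assms in simp)

lemma norm_diff_midpoint_square:
  fixes a b h :: "'a::chilbert"
  shows   "(norm (a - b))\<^sup>2 = 2 * (norm (h - a))\<^sup>2 + 2 * (norm (h - b))\<^sup>2
     - 4 * (norm (h - (1/2) *\<^sub>R (a + b)))\<^sup>2"
proof -
  have "(h - a) + (h - b) = 2 *\<^sub>R (h - (1/2) *\<^sub>R (a + b))" "(h - a) - (h - b) = - (a - b)"
    by (simp_all add: algebra_simps flip: scaleR_2)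
  then show ?thesis
    using parallelogram[of "h - a" "h - b"] by (simp add: power_mult_distrib norm_minus_commute)
qed

lemma Cauchy_minimizing_sequence:
  fixes m :: "nat \<Rightarrow> 'a::chilbert"
  assumes "csubspace M" and m: "\<And>n. m n \<in> M" "\<And>n. (norm (h - m n))\<^sup>2 < d\<^sup>2 + inverse (Suc n)"
    and d_le: "\<And>y. y \<in> M \<Longrightarrow> d \<le> norm (h - y)" and "d \<ge> 0"
  shows "Cauchy m"
proof -
  have close: "(norm (m i - m j))\<^sup>2 < 2 * inverse (Suc i) + 2 * inverse (Suc j)" for i j
  proof -
    have "(1/2) *\<^sub>R (m i + m j) \<in> M"
      using assms(1) m(1) by (simp add: csubspace_def flip: cscale_of_real)
    then have "d\<^sup>2 \<le> (norm (h - (1/2) *\<^sub>R (m i + m j)))\<^sup>2"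
      using d_le \<open>d \<ge> 0\<close> by (blast intro: power_mono)
    then show ?thesis
      using norm_diff_midpoint_square[of "m i" "m j" h] m(2)[of i] m(2)[of j] by linarith
  qed
  show "Cauchy m"
  proof (rule CauchyI)
    fix e :: real assume "0 < e"
    obtain N where N: "inverse (Suc N) < e\<^sup>2 / 4"
      using reals_Archimedean[of "e\<^sup>2 / 4"] \<open>0 < e\<close> by auto
    have "norm (m i - m j) < e" if "N \<le> i" "N \<le> j" for i j
    proof -
      have "inverse (Suc i) \<le> inverse (Suc N)" "inverse (Suc j) \<le> inverse (Suc N)"
        using that by (simp_all add: le_imp_inverse_le)
      then have "(norm (m i - m j))\<^sup>2 < e\<^sup>2"
        using close[of i j] N by linarith
      then show ?thesis
        using \<open>0 < e\<close> by (simp add: power_less_imp_less_base)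
    qed
    then show "\<exists>N. \<forall>i\<ge>N. \<forall>j\<ge>N. norm (m i - m j) < e"
      by blast
  qed
qed

lemma closest_point_exists:
  fixes M :: "'a::chilbert set"
  assumes M: "csubspace M" "closed M"
  obtains p where "p \<in> M" and "\<And>y. y \<in> M \<Longrightarrow> norm (h - p) \<le> norm (h - y)"
proof -
  define d where "d = (INF y\<in>M. norm (h - y))"
  have "M \<noteq> {}"
    using M(1) by (auto simp: csubspace_def)
  have bdd: "bdd_below ((\<lambda>y. norm (h - y)) ` M)"
    by (rule bdd_belowI2[of _ 0]) simp
  have d_le: "d \<le> norm (h - y)" if "y \<in> M" for y
    unfolding d_def using bdd that by (rule cINF_lower)
  have "d \<ge> 0"
    unfolding d_def using \<open>M \<noteq> {}\<close> by (simp add: le_cINF_iff bdd)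
  have "\<exists>y\<in>M. (norm (h - y))\<^sup>2 < d\<^sup>2 + inverse (Suc n)" for n
  proof -
    have "d < sqrt (d\<^sup>2 + inverse (Suc n))"
      using \<open>d \<ge> 0\<close> by (simp add: real_less_rsqrt)
    then obtain y where "y \<in> M" "norm (h - y) < sqrt (d\<^sup>2 + inverse (Suc n))"
      unfolding d_def using \<open>M \<noteq> {}\<close> bdd by (auto simp: cINF_less_iff)
    moreover have "(norm (h - y))\<^sup>2 < (sqrt (d\<^sup>2 + inverse (Suc n)))\<^sup>2"
      using calculation(2) by (rule power_strict_mono) simp_all
    ultimately show ?thesis
      by auto
  qed
  then obtain m where m: "\<And>n. m n \<in> M" "\<And>n. (norm (h - m n))\<^sup>2 < d\<^sup>2 + inverse (Suc n)"
    by (metis (full_types))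
  then have "Cauchy m"
    using M(1) d_le \<open>d \<ge> 0\<close> Cauchy_minimizing_sequence by blast
  then obtain p where p: "m \<longlonglongrightarrow> p"
    using Cauchy_convergent_iff convergent_def by blast
  have "(norm (h - p))\<^sup>2 \<le> d\<^sup>2"
  proof (rule LIMSEQ_le)
    show "(\<lambda>n. (norm (h - m n))\<^sup>2) \<longlonglongrightarrow> (norm (h - p))\<^sup>2"
      by (intro tendsto_intros p)
    show "(\<lambda>n. d\<^sup>2 + inverse (Suc n)) \<longlonglongrightarrow> d\<^sup>2"
      using tendsto_add[OF tendsto_const LIMSEQ_inverse_real_of_nat, of "d\<^sup>2"] by simp
  qed (intro exI[of _ 0] allI impI less_imp_le m(2))
  then have "norm (h - p) \<le> d"
    using \<open>d \<ge> 0\<close> by (rule power2_le_imp_le)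
  moreover have "p \<in> M"
    using M(2) m(1) p closed_sequentially by blast
  ultimately show ?thesis
    using d_le by (meson order_trans that)
qed

lemma closest_point_orthogonal:
  assumes M: "csubspace M" and "p \<in> M" and closest: "\<And>y. y \<in> M \<Longrightarrow> norm (h - p) \<le> norm (h - y)"
    and "y \<in> M"
  shows "cinner (h - p) y = 0"
proof (rule ccontr)
  define c where "c = cinner (h - p) y"
  assume "cinner (h - p) y \<noteq> 0"
  then have "c \<noteq> 0"
    by (simp add: c_def)
  define s where "s = 1 / ((norm y)\<^sup>2 + 1)"
  have "(norm y)\<^sup>2 + 1 > 0"
    by (simp add: add_nonneg_pos)
  then have "s > 0" "s * (norm y)\<^sup>2 < 1"
    by (simp_all add: s_def field_simps)
  define t where "t = complex_of_real s * c"
  have "p + t *\<^sub>C y \<in> M"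
    using M \<open>p \<in> M\<close> \<open>y \<in> M\<close> by (simp add: csubspace_eq_subspace cscale.subspace_add cscale.subspace_scale)
  then have "norm (h - p) \<le> norm ((h - p) + (- t) *\<^sub>C y)"
    using closest by (simp add: algebra_simps)
  then have "(norm (h - p))\<^sup>2 \<le> (norm ((h - p) + (- t) *\<^sub>C y))\<^sup>2"
    by (rule power_mono) simp
  also have "\<dots> = (norm (h - p))\<^sup>2 + (norm ((- t) *\<^sub>C y))\<^sup>2 + 2 * Re (cinner (h - p) ((- t) *\<^sub>C y))"
    by (rule norm_add_square)
  also have "\<dots> = (norm (h - p))\<^sup>2 + (s * cmod c * norm y)\<^sup>2 - 2 * (s * (cmod c)\<^sup>2)"
  proof -
    have "cnj c * c = (complex_of_real (cmod c))\<^sup>2"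
      using complex_norm_square[of c] by (simp add: mult.commute)
    then have "cinner (h - p) ((- t) *\<^sub>C y) = - complex_of_real (s * (cmod c)\<^sup>2)"
      by (simp add: t_def cinner_minus_right cinner_cscale_right mult.assoc flip: c_def)
    then show ?thesis
      using \<open>s > 0\<close> by (simp add: t_def norm_cscale norm_mult)
  qed
  finally have "2 * (s * (cmod c)\<^sup>2) \<le> (s * (norm y)\<^sup>2) * (s * (cmod c)\<^sup>2)"
    by (simp add: power2_eq_square algebra_simps)
  moreover have "s * (cmod c)\<^sup>2 > 0"
    using \<open>s > 0\<close> \<open>c \<noteq> 0\<close> by simp
  ultimately have "2 \<le> s * (norm y)\<^sup>2"
    using mult_le_cancel_right_pos by blast
  then show False
    using \<open>s * (norm y)\<^sup>2 < 1\<close> by simp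
qed

lemma cproj_mem_orthogonal:
  assumes "csubspace M" and "closed M"
  shows "cproj M h \<in> M" and "\<And>y. y \<in> M \<Longrightarrow> cinner (h - cproj M h) y = 0"
proof -
  obtain p where p: "p \<in> M" "\<And>y. y \<in> M \<Longrightarrow> norm (h - p) \<le> norm (h - y)"
    using closest_point_exists[OF assms] by blast
  then have "cproj M h = p"
    using assms(1) by (intro cproj_eqI closest_point_orthogonal) auto
  then show "cproj M h \<in> M" "\<And>y. y \<in> M \<Longrightarrow> cinner (h - cproj M h) y = 0"
    using p closest_point_orthogonal[OF assms(1) p] by auto
qed

section \<open>Closed symmetric operators and the Cayley transform\<close>

locale closed_symmetric =
  fixes B :: "'h::chilbert \<Rightarrow> 'h" and D :: "'h set"
  assumes csubspace_dom: "csubspace D"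
    and clinear: "clinear_on D B"
    and symmetric: "\<And>x y. x \<in> D \<Longrightarrow> y \<in> D \<Longrightarrow> cinner (B x) y = cinner x (B y)"
    and closed_graph: "closed {(x, B x) | x. x \<in> D}"

lemma in_Sn_closed_symmetric: "in_Sn n B D \<Longrightarrow> closed_symmetric B D"
  by (simp add: in_Sn_def closed_symmetric_def)

context closed_symmetric
begin

lemma dom_zero: "0 \<in> D"
  and dom_diff: "x \<in> D \<Longrightarrow> y \<in> D \<Longrightarrow> x - y \<in> D"
  using csubspace_dom by (simp_all add: csubspace_eq_subspace cscale.subspace_0 cscale.subspace_diff)

lemma B_diff:
  assumes "x \<in> D" "y \<in> D"
  shows "B (x - y) = B x - B y"
proof -
  have "B x = B ((x - y) + y)"
    by simp
  also have "\<dots> = B (x - y) + B y"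
    using clinear dom_diff[OF assms] assms(2) unfolding clinear_on_def by blast
  finally show ?thesis
    by (simp add: algebra_simps)
qed

lemma shift_diff: "x \<in> D \<Longrightarrow> y \<in> D \<Longrightarrow> B (x - y) - a *\<^sub>C (x - y) = (B x - a *\<^sub>C x) - (B y - a *\<^sub>C y)"
  by (simp add: B_diff algebra_simps)

lemma norm_shift_square:
  assumes "x \<in> D"
  shows "(norm (B x - a *\<^sub>C x))\<^sup>2 = (norm (B x - Re a *\<^sub>R x))\<^sup>2 + (Im a)\<^sup>2 * (norm x)\<^sup>2"
proof -
  define u v where "u = B x - Re a *\<^sub>R x" and "v = (- Im a) *\<^sub>R (\<i> *\<^sub>C x)"
  have "Im (cinner (B x) x) = 0"
    using arg_cong[OF symmetric[OF assms assms], of Im] cinner_commute[of x "B x"] by simp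
  then have "Re (cinner u v) = 0"
    unfolding u_def v_def
    by (simp add: cinner_diff_left cinner_cscale_left cinner_cscale_right cinner_minus_right cinner_self
        flip: cscale_of_real)
  moreover have "B x - a *\<^sub>C x = u + v"
    unfolding u_def v_def by (simp add: cscale_eq_scaleR_Re_Im[of a x])
  then have "(norm (B x - a *\<^sub>C x))\<^sup>2 = (norm u)\<^sup>2 + (norm v)\<^sup>2 + 2 * Re (cinner u v)"
    by (simp only: norm_add_square)
  ultimately show ?thesis
    by (simp add: power_mult_distrib u_def v_def)
qed

lemma Im_norm_le_norm_shift: "x \<in> D \<Longrightarrow> \<bar>Im a\<bar> * norm x \<le> norm (B x - a *\<^sub>C x)"
  by (rule power2_le_imp_le) (simp_all add: norm_shift_square power_mult_distrib)

lemma norm_shift_cnj: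
  assumes "x \<in> D"
  shows "norm (B x - cnj a *\<^sub>C x) = norm (B x - a *\<^sub>C x)"
  using norm_shift_square[OF assms, of a] norm_shift_square[OF assms, of "cnj a"]
  by (intro power2_eq_imp_eq[of "norm (B x - cnj a *\<^sub>C x)"]) simp_all

lemma shift_inj:
  assumes "Im a \<noteq> 0" "x \<in> D" "y \<in> D" "B x - a *\<^sub>C x = B y - a *\<^sub>C y"
  shows "x = y"
  using Im_norm_le_norm_shift[OF dom_diff[OF assms(2,3)], of a] assms by (simp add: shift_diff mult_le_0_iff)

lemma csubspace_ranB: "csubspace (ranB B D a)"
  unfolding csubspace_def
proof (intro conjI ballI allI)
  have "B 0 = 0"
    using B_diff[OF dom_zero dom_zero] by simp
  then show "0 \<in> ranB B D a"
    unfolding ranB_def using dom_zero by force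
next
  fix p q assume "p \<in> ranB B D a" "q \<in> ranB B D a"
  then obtain x y where "x \<in> D" "y \<in> D" "p = B x - a *\<^sub>C x" "q = B y - a *\<^sub>C y"
    unfolding ranB_def by blast
  moreover have "x + y \<in> D" "B (x + y) = B x + B y"
    using csubspace_dom clinear \<open>x \<in> D\<close> \<open>y \<in> D\<close> by (simp_all add: csubspace_def clinear_on_def)
  ultimately have "x + y \<in> D" "p + q = B (x + y) - a *\<^sub>C (x + y)"
    by (simp_all add: cscale_add_right)
  then show "p + q \<in> ranB B D a"
    unfolding ranB_def by blast
next
  fix c p assume "p \<in> ranB B D a"
  then obtain x where "x \<in> D" "p = B x - a *\<^sub>C x"
    unfolding ranB_def by blast
  moreover have "c *\<^sub>C x \<in> D" "B (c *\<^sub>C x) = c *\<^sub>C B x"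
    using csubspace_dom clinear \<open>x \<in> D\<close> by (simp_all add: csubspace_def clinear_on_def)
  ultimately have "c *\<^sub>C x \<in> D" "c *\<^sub>C p = B (c *\<^sub>C x) - a *\<^sub>C (c *\<^sub>C x)"
    by (simp_all add: cscale.scale_right_diff_distrib mult.commute)
  then show "c *\<^sub>C p \<in> ranB B D a"
    unfolding ranB_def by blast
qed

lemma closed_ranB:
  assumes "Im a \<noteq> 0"
  shows "closed (ranB B D a)"
proof (rule closed_sequential_limits[THEN iffD2], intro allI impI)
  fix f l assume fl: "(\<forall>k. f k \<in> ranB B D a) \<and> f \<longlonglongrightarrow> l"
  then have "\<forall>k. \<exists>x. x \<in> D \<and> f k = B x - a *\<^sub>C x"
    unfolding ranB_def by blast
  then obtain x where x: "\<And>k. x k \<in> D" "\<And>k. f k = B (x k) - a *\<^sub>C x k"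
    by metis
  have "Cauchy x"
  proof (rule CauchyI)
    fix e :: real assume "0 < e"
    then obtain M where M: "\<forall>i\<ge>M. \<forall>j\<ge>M. norm (f i - f j) < e * \<bar>Im a\<bar>"
      using CauchyD[OF LIMSEQ_imp_Cauchy, of f l "e * \<bar>Im a\<bar>"] fl assms by auto
    have "\<bar>Im a\<bar> * norm (x i - x j) < e * \<bar>Im a\<bar>" if "M \<le> i" "M \<le> j" for i j
    proof -
      have "\<bar>Im a\<bar> * norm (x i - x j) \<le> norm (f i - f j)"
        using Im_norm_le_norm_shift[OF dom_diff[OF x(1) x(1)], of a i j] by (simp add: shift_diff x)
      then show ?thesis
        using M that by fastforce
    qed
    then show "\<exists>M. \<forall>i\<ge>M. \<forall>j\<ge>M. norm (x i - x j) < e"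
      using assms by (auto simp: mult.commute)
  qed
  then obtain p where p: "x \<longlonglongrightarrow> p"
    using Cauchy_convergent_iff convergent_def by blast
  have "(\<lambda>k. f k + a *\<^sub>C x k) \<longlonglongrightarrow> l + a *\<^sub>C p"
    using fl p by (intro tendsto_add bounded_linear.tendsto[OF bounded_linear_cscale]) auto
  then have lim: "(\<lambda>k. (x k, B (x k))) \<longlonglongrightarrow> (p, l + a *\<^sub>C p)"
    using p x(2) by (intro tendsto_Pair) auto
  have "(x k, B (x k)) \<in> {(x, B x) | x. x \<in> D}" for k
    using x(1) by blast
  then have "(p, l + a *\<^sub>C p) \<in> {(x, B x) | x. x \<in> D}"
    using closed_sequentially[OF closed_graph _ lim] by blast
  then have "p \<in> D" "l = B p - a *\<^sub>C p"
    by (auto simp: eq_diff_eq)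
  then show "l \<in> ranB B D a"
    unfolding ranB_def by blast
qed

end

locale cayley = closed_symmetric +
  fixes w :: complex
  assumes Im_w: "Im w \<noteq> 0"
begin

lemma Qw_mem: "Qw B D w h \<in> ranB B D (cnj w)"
  and Qw_orthogonal: "y \<in> ranB B D (cnj w) \<Longrightarrow> cinner (h - Qw B D w h) y = 0"
  using cproj_mem_orthogonal[OF csubspace_ranB closed_ranB, of "cnj w"] Im_w by (simp_all add: Qw_def)

lemma defect_orthogonal: "x \<in> defect_space B D w \<Longrightarrow> y \<in> ranB B D (cnj w) \<Longrightarrow> cinner x y = 0"
  unfolding defect_space_def orth_def by (subst cinner_commute) simp

lemma Pw_mem_defect: "Pw B D w h \<in> defect_space B D w"
  unfolding defect_space_def orth_def Pw_def using Qw_orthogonal by (subst cinner_commute) simp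

lemma cinner_defect_Pw: "x \<in> defect_space B D w \<Longrightarrow> cinner x (Pw B D w h) = cinner x h"
  by (simp add: Pw_def cinner_diff_right defect_orthogonal[OF _ Qw_mem])

lemma norm_Pw_Qw: "(norm h)\<^sup>2 = (norm (Pw B D w h))\<^sup>2 + (norm (Qw B D w h))\<^sup>2"
proof -
  have "cinner (h - Qw B D w h) (Qw B D w h) = 0"
    by (rule Qw_orthogonal[OF Qw_mem])
  then show ?thesis
    using norm_add_Pythagorean_cinner by (fastforce simp: Pw_def)
qed

lemma Qw_defect: "x \<in> defect_space B D w \<Longrightarrow> Qw B D w x = 0"
  unfolding Qw_def using csubspace_ranB[of "cnj w"]
  by (intro cproj_eqI) (simp_all add: csubspace_def defect_orthogonal)

lemma bwB_eq:
  assumes "r \<in> ranB B D (cnj w)"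
  obtains x where "x \<in> D" "r = B x - cnj w *\<^sub>C x" "bwB B D w r = B x - w *\<^sub>C x"
proof -
  obtain x where x: "x \<in> D" "r = B x - cnj w *\<^sub>C x"
    using assms unfolding ranB_def by blast
  moreover have "(THE x. x \<in> D \<and> B x - cnj w *\<^sub>C x = r) = x"
    using x shift_inj[of "cnj w"] Im_w by (intro the_equality) auto
  ultimately show ?thesis
    using that by (simp add: bwB_def)
qed

lemma norm_bwB: "r \<in> ranB B D (cnj w) \<Longrightarrow> norm (bwB B D w r) = norm r"
  by (metis bwB_eq norm_shift_cnj)

lemma norm_Vw: "norm (Vw B D w h) = norm (Qw B D w h)"
  by (simp add: Vw_def norm_bwB[OF Qw_mem])

lemma Vw_defect: "x \<in> defect_space B D w \<Longrightarrow> Vw B D w x = 0"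
proof -
  assume "x \<in> defect_space B D w"
  then have "Vw B D w x = bwB B D w 0"
    by (simp add: Vw_def Qw_defect)
  also have "\<dots> = 0"
    using norm_bwB[of 0] csubspace_ranB by (simp add: csubspace_def)
  finally show ?thesis .
qed

lemma summable_norm_Pw_Vw: "summable (\<lambda>j. (norm (Pw B D w ((Vw B D w ^^ j) h)))\<^sup>2)"
proof -
  have "(norm (Pw B D w ((Vw B D w ^^ j) h)))\<^sup>2
      = (norm ((Vw B D w ^^ j) h))\<^sup>2 - (norm ((Vw B D w ^^ Suc j) h))\<^sup>2" for j
    using norm_Pw_Qw[of "(Vw B D w ^^ j) h"] norm_Vw[of "(Vw B D w ^^ j) h"] by simp
  then have "(\<Sum>j<m. (norm (Pw B D w ((Vw B D w ^^ j) h)))\<^sup>2)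
      = (norm h)\<^sup>2 - (norm ((Vw B D w ^^ m) h))\<^sup>2" for m
    by (induction m) simp_all
  then show ?thesis
    by (intro summableI_nonneg_bounded[of _ "(norm h)\<^sup>2"]) simp_all
qed

end

lemma unitary_cinner: "unitary_op U \<Longrightarrow> cinner (U a) (U b) = cinner a b"
  by (simp add: unitary_op_def cinner_isometry)

lemma unitary_inv:
  assumes "unitary_op U"
  shows "unitary_op (inv U)"
proof -
  have U: "clinear_on UNIV U" "bij U" "\<And>x. norm (U x) = norm x"
    using assms by (simp_all add: unitary_op_def)
  have U_inv: "U (inv U x) = x" and inv_U: "inv U (U x) = x" for x
    using U(2) by (simp_all add: bij_is_surj surj_f_inv_f bij_is_inj inv_f_f)
  have "inv U (x + y) = inv U (U (inv U x + inv U y))" for x y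
    using U(1) by (simp add: clinear_on_def U_inv)
  moreover have "inv U (c *\<^sub>C x) = inv U (U (c *\<^sub>C inv U x))" for x c
    using U(1) by (simp add: clinear_on_def U_inv)
  moreover have "norm (inv U x) = norm x" for x
    using U(3)[of "inv U x"] by (simp add: U_inv)
  ultimately show ?thesis
    by (simp add: unitary_op_def clinear_on_def bij_imp_bij_inv U(2) inv_U)
qed

lemma upow_zero [simp]: "upow U 0 x = x"
  by (simp add: upow_def)

lemma unitary_funpow: "unitary_op U \<Longrightarrow> unitary_op (U ^^ n)"
  by (induction n) (auto simp: unitary_op_def clinear_on_def bij_comp bij_betw_funpow)

lemma unitary_upow: "unitary_op U \<Longrightarrow> unitary_op (upow U k)"
  by (simp add: upow_def unitary_funpow unitary_inv)

lemma upow_plus_one: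
  assumes "bij U"
  shows "upow U (k + 1) x = U (upow U k x)"
proof (cases "k \<ge> 0")
  case True
  then show ?thesis
    by (simp add: upow_def nat_add_distrib)
next
  case False
  then have "nat (- k) = Suc (nat (- (k + 1)))"
    by linarith
  then show ?thesis
    using False by (simp add: upow_def bij_is_surj[OF assms] surj_f_inv_f)
qed

lemma upow_minus_one: "bij U \<Longrightarrow> upow U (k - 1) x = inv U (upow U k x)"
  using upow_plus_one[of U "k - 1" x] by (simp add: bij_is_inj inv_f_f)

lemma upow_add:
  assumes "bij U"
  shows "upow U (k + l) x = upow U k (upow U l x)"
proof (induction k rule: int_induct[where k = 0])
  case base
  then show ?case
    by simp
next
  case (step1 i)
  then show ?case
    using upow_plus_one[OF assms] by (metis add.commute add.left_commute)
next
  case (step2 i)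
  then show ?case
    using upow_minus_one[OF assms] by (metis diff_add_eq)
qed

lemma cinner_upow_left:
  assumes "unitary_op U"
  shows "cinner (upow U k a) b = cinner a (upow U (- k) b)"
proof -
  have "b = upow U k (upow U (- k) b)"
    using assms by (simp add: unitary_op_def flip: upow_add)
  then have "cinner (upow U k a) b = cinner (upow U k a) (upow U k (upow U (- k) b))"
    by simp
  then show ?thesis
    using unitary_cinner[OF unitary_upow[OF assms]] by simp
qed

lemma norm_sum_Pythagorean_cinner:
  assumes "\<And>i j. i \<in> A \<Longrightarrow> j \<in> A \<Longrightarrow> i \<noteq> j \<Longrightarrow> cinner (f i) (f j) = 0"
  shows "(norm (\<Sum>j\<in>A. f j))\<^sup>2 = (\<Sum>j\<in>A. (norm (f j))\<^sup>2)"
  using assms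
proof (induction A rule: infinite_finite_induct)
  case (insert a A)
  then have "cinner (f a) (\<Sum>j\<in>A. f j) = 0"
    by (auto simp: cinner_sum_right intro!: sum.neutral)
  with insert show ?case
    by (simp add: norm_add_Pythagorean_cinner)
qed simp_all

lemma summable_orthogonal:
  fixes f :: "nat \<Rightarrow> 'a::chilbert"
  assumes orth: "\<And>i j. i \<noteq> j \<Longrightarrow> cinner (f i) (f j) = 0"
    and summable: "summable (\<lambda>j. (norm (f j))\<^sup>2)"
  shows "summable f"
  unfolding summable_Cauchy
proof (intro allI impI)
  fix e :: real assume "0 < e"
  then obtain N where N: "\<And>m n. N \<le> m \<Longrightarrow> norm (\<Sum>j\<in>{m..<n}. (norm (f j))\<^sup>2) < e\<^sup>2"
    using summable[unfolded summable_Cauchy, rule_format, of "e\<^sup>2"] by auto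
  have "norm (\<Sum>j\<in>{m..<n}. f j) < e" if "N \<le> m" for m n
  proof -
    have "(norm (\<Sum>j\<in>{m..<n}. f j))\<^sup>2 = (\<Sum>j\<in>{m..<n}. (norm (f j))\<^sup>2)"
      using orth by (rule norm_sum_Pythagorean_cinner)
    also have "\<dots> < e\<^sup>2"
      using N[OF that, of n] by simp
    finally show ?thesis
      using \<open>0 < e\<close> by (simp add: power_less_imp_less_base)
  qed
  then show "\<exists>N. \<forall>m\<ge>N. \<forall>n. norm (\<Sum>j\<in>{m..<n}. f j) < e"
    by blast
qed

lemma sums_cinner_right: "f sums s \<Longrightarrow> (\<lambda>j. cinner g (f j)) sums cinner g s"
  unfolding sums_def by (simp add: tendsto_cinner_right flip: cinner_sum_right)

lemma sums_closure_cspan: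
  assumes "f sums s" and "\<And>j. f j \<in> G"
  shows "s \<in> closure (cspan G)"
proof -
  have "(\<Sum>j<n. f j) \<in> cspan G" for n
    using assms(2) by (simp add: cspan_eq_span cscale.span_sum cscale.span_base)
  then show ?thesis
    using assms(1) unfolding sums_def by (meson closure_sequential)
qed

lemma cproj_orth_closure_cspan:
  assumes "s \<in> closure (cspan G)" and "\<And>g. g \<in> G \<Longrightarrow> cinner g (v - s) = 0"
  shows "cproj (orth (closure (cspan G))) v = v - s"
proof (rule cproj_eqI[OF orth_csubspace])
  show "v - s \<in> orth (closure (cspan G))"
    unfolding orth_def using assms(2) orthogonal_closure_span by blast
  show "cinner (v - (v - s)) y = 0" if "y \<in> orth (closure (cspan G))" for y
    using that assms(1) by (simp add: orth_def)
qed

section \<open>Unitary dilations\<close>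

locale dilation =
  fixes J :: "'h::chilbert \<Rightarrow> 'k::chilbert" and U :: "'k \<Rightarrow> 'k" and T :: "'h \<Rightarrow> 'h"
  assumes unitary_dilation: "unitary_dilation J U T"
begin

lemma unitary: "unitary_op U"
  and J_clinear: "clinear_on UNIV J"
  and norm_J: "norm (J x) = norm x"
  and J_funpow: "J ((T ^^ m) x) = cproj (range J) ((U ^^ m) (J x))"
  using unitary_dilation by (simp_all add: unitary_dilation_def isometric_embedding_def)

lemma cinner_J: "cinner (J x) (J y) = cinner x y"
  using J_clinear norm_J by (rule cinner_isometry)

lemma J_add: "J (x + y) = J x + J y"
  and J_cscale: "J (c *\<^sub>C x) = c *\<^sub>C J x"
  using J_clinear by (simp_all add: clinear_on_def)

lemma J_zero: "J 0 = 0"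
  using J_add[of 0 0] by simp

lemma U_zero: "U 0 = 0"
proof -
  have "U (0 + 0) = U 0 + U 0"
    using unitary by (simp only: unitary_op_def clinear_on_def) blast
  then show ?thesis
    by simp
qed

lemma csubspace_range_J: "csubspace (range J)"
  unfolding csubspace_def by (auto simp flip: J_add J_cscale J_zero)

lemma closed_range_J: "closed (range J)"
proof -
  have "complete (J ` UNIV)"
    using J_clinear norm_J
    by (intro complete_isometric_image[of 1] bounded_linear_clinear_isometry complete_UNIV) auto
  then show ?thesis
    by (simp add: complete_eq_closed)
qed

lemma cinner_funpow_J: "cinner ((U ^^ m) (J x)) (J y) = cinner ((T ^^ m) x) y"
proof -
  have "cinner ((U ^^ m) (J x) - cproj (range J) ((U ^^ m) (J x))) (J y) = 0"
    using cproj_mem_orthogonal(2)[OF csubspace_range_J closed_range_J] by blast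
  then show ?thesis
    by (simp add: cinner_diff_left cinner_J flip: J_funpow)
qed

lemma T_zero: "T 0 = 0"
proof -
  \<comment> \<open>\<open>T\<close> is not assumed linear; this follows from the dilation identity for one step.\<close>
  have "J (T 0) = cproj (range J) 0"
    using J_funpow[of 1 0] by (simp add: J_zero U_zero)
  also have "\<dots> = 0"
    using csubspace_range_J by (intro cproj_eqI) (auto simp: csubspace_def)
  finally show ?thesis
    using norm_J[of "T 0"] by simp
qed

lemma funpow_kernel_zero: "T x = 0 \<Longrightarrow> 0 < m \<Longrightarrow> (T ^^ m) x = 0"
proof (induction m)
  case (Suc m)
  then show ?case
    by (cases m) (simp_all add: T_zero)
qed simp

lemma cinner_upow_J:
  "cinner (upow U k (J x)) (J y) =
     (if 0 \<le> k then cinner ((T ^^ nat k) x) y else cinner x ((T ^^ nat (- k)) y))"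
proof (cases "0 \<le> k")
  case False
  have "cinner (upow U k (J x)) (J y) = cinner (J x) ((U ^^ nat (- k)) (J y))"
    using False cinner_upow_left[OF unitary, of k "J x" "J y"] by (simp add: upow_def)
  also have "\<dots> = cinner x ((T ^^ nat (- k)) y)"
    by (subst (1 2) cinner_commute) (simp add: cinner_funpow_J)
  finally show ?thesis
    using False by simp
qed (simp add: upow_def cinner_funpow_J)

lemma cinner_upow_J_kernel:
  assumes "T x = 0"
  shows "cinner (upow U k (J x)) (J h) = (if k \<le> 0 then cinner x ((T ^^ nat (- k)) h) else 0)"
  using funpow_kernel_zero[OF assms, of "nat k"] by (simp add: cinner_upow_J)

lemma cinner_upow_J_upow_J:
  assumes "T x = 0" and "T y = 0"
  shows "cinner (upow U k (J x)) (upow U l (J y)) = (if k = l then cinner x y else 0)"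
proof -
  have "cinner (upow U k (J x)) (upow U l (J y)) = cinner (upow U (k - l) (J x)) (J y)"
    using unitary by (simp add: cinner_upow_left unitary_op_def flip: upow_add)
  then show ?thesis
    using funpow_kernel_zero[OF assms(1), of "nat (k - l)"] funpow_kernel_zero[OF assms(2), of "nat (l - k)"]
    by (simp add: cinner_upow_J)
qed

end

lemma (in dilation) norm_upow_J: "norm (upow U k (J x)) = norm x"
  using unitary_upow[OF unitary, of k] by (simp add: unitary_op_def norm_J)

lemma (in dilation) cinner_orbit_series:
  assumes "T x = 0" and "\<And>j. T (v j) = 0" and "\<And>j. cinner x (v j) = cinner x ((T ^^ j) h)"
  shows "(\<lambda>j. cinner (upow U k (J x)) (upow U (- int j) (J (v j)))) sums cinner (upow U k (J x)) (J h)"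
proof -
  define c where "c = (if k \<le> 0 then cinner x ((T ^^ nat (- k)) h) else 0)"
  have "cinner (upow U k (J x)) (upow U (- int j) (J (v j))) = (if j = nat (- k) then c else 0)" for j
    using assms by (auto simp: cinner_upow_J_upow_J c_def)
  then show ?thesis
    using sums_single[of "nat (- k)" "\<lambda>_. c"] assms(1) by (simp add: cinner_upow_J_kernel c_def)
qed

theorem (in dilation) sums_proj_closure_orbit_kernel:
  assumes kernel: "\<And>x. x \<in> N \<Longrightarrow> T x = 0"
    and P_mem: "\<And>h. P h \<in> N"
    and cinner_P: "\<And>x h. x \<in> N \<Longrightarrow> cinner x (P h) = cinner x h"
    and summable: "summable (\<lambda>j. (norm (P ((T ^^ j) h)))\<^sup>2)"
  shows "(\<lambda>j. upow U (- int j) (J (P ((T ^^ j) h))))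
           sums (J h - cproj (orth (closure (cspan {upow U k (J x) | k x. x \<in> N}))) (J h))"
proof -
  define G where "G = {upow U k (J x) | k x. x \<in> N}"
  define f where "f = (\<lambda>j. upow U (- int j) (J (P ((T ^^ j) h))))"
  have f_G: "f j \<in> G" for j
    using P_mem unfolding f_def G_def by blast
  have "summable f"
    using summable
    by (intro summable_orthogonal) (simp_all add: f_def norm_upow_J cinner_upow_J_upow_J kernel P_mem)
  then have s: "f sums suminf f"
    by (rule summable_sums)
  have "cinner g (J h - suminf f) = 0" if "g \<in> G" for g
  proof -
    obtain k x where g: "g = upow U k (J x)" and "x \<in> N"
      using \<open>g \<in> G\<close> unfolding G_def by blast
    then have "(\<lambda>j. cinner g (f j)) sums cinner g (J h)"
      using cinner_orbit_series[of x "\<lambda>j. P ((T ^^ j) h)" h k] kernel P_mem cinner_P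
      by (simp add: f_def g)
    with sums_cinner_right[OF s] show ?thesis
      by (simp add: cinner_diff_right sums_unique2)
  qed
  then have "cproj (orth (closure (cspan G))) (J h) = J h - suminf f"
    by (intro cproj_orth_closure_cspan sums_closure_cspan[OF s f_G])
  then show ?thesis
    using s by (simp add: f_def G_def)
qed

theorem (in cayley) sums_proj_closure_orbit_defect:
  assumes "unitary_dilation J U (Vw B D w)"
  shows "(\<lambda>j. upow U (- int j) (J (Pw B D w ((Vw B D w ^^ j) h))))
           sums (J h - cproj (orth (closure (cspan
                   {upow U k (J x) | k x. x \<in> defect_space B D w}))) (J h))"
  using assms
  by (intro dilation.sums_proj_closure_orbit_kernel dilation.intro)
    (simp_all add: Vw_defect Pw_mem_defect cinner_defect_Pw summable_norm_Pw_Vw)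

theorem mainTheorem8:
  fixes n :: nat and B :: "'h::chilbert \<Rightarrow> 'h" and D :: "'h set" and w :: complex
    and J :: "'h \<Rightarrow> 'k::chilbert" and U :: "'k \<Rightarrow> 'k" and h :: 'h
  assumes "separable_space TYPE('h)"
    and "n \<ge> 1"
    and "in_Sn n B D"
    and "Im w \<noteq> 0"
    and "minimal_unitary_dilation J U (Vw B D w)"
  shows "(\<lambda>j. upow U (- int j) (J (Pw B D w ((Vw B D w ^^ j) h))))
           sums (J h - cproj (orth (closure (cspan
                   {upow U k (J x) | k x. x \<in> defect_space B D w}))) (J h))"
proof -
  interpret cayley B D w
    using in_Sn_closed_symmetric[OF assms(3)] assms(4) by (simp add: cayley_def cayley_axioms_def)
  show ?thesis
    using assms(5) unfolding minimal_unitary_dilation_def by (blast intro: sums_proj_closure_orbit_defect)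
qed

end
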